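(* Let $\Gamma$ be a complete dominance graph on vertex set $\{1,\dots,n\}$ and let $L=D-A$ be its graph Laplacian. Let $V$ be the $n\times n$ matrix whose $i$th column is $\mathbf{v}_i=\sum_{k=1}^{i}\mathbf{e}_k$ (with $\mathbf{e}_k$ the standard basis vectors of $\mathbb{R}^n$). Then $V^{-1}$ is the upper bidiagonal matrix with all diagonal entries equal to $1$, all superdiagonal entries equal to $-1$, and all other entries $0$. Moreover, there exists a permutation matrix $P$ such that, for each $i=1,\dots,n$, the $i$th row of $V^{-1}$ is a left eigenvector of $P^TLP$ for the eigenvalue $n-i$.
   Context: For a weighted digraph with weights $w_{ij}\ge 0$, $d^{+}(i)=\sum_j w_{ij}$, $D=\mathrm{diag}(d^{+}(1),\dots,d^{+}(n))$, $A=[w_{ij}]$, $L=D-A$. A complete dominance graph is an acyclic tournament (for each pair of distinct vertices exactly one of $(i,j),(j,i)$ is an edge) in which every edge has weight $1$. A left eigenvector $\mathbf{w}$ of a matrix $M$ for eigenvalue $\lambda$ is a nonzero vector with $\mathbf{w}^{*}M=\lambda\mathbf{w}^{*}$. *)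

theory Defs
  imports "Jordan_Normal_Form.Matrix" "HOL-Combinatorics.Permutations"
begin

(* Vertices are 0,...,n-1 (0-based version of {1,...,n}); a digraph is an edge set. *)

definition complete_dominance_graph :: "nat \<Rightarrow> (nat \<times> nat) set \<Rightarrow> bool" where
  "complete_dominance_graph n G \<longleftrightarrow>
     G \<subseteq> {..<n} \<times> {..<n} \<and>
     (\<forall>i<n. \<forall>j<n. i \<noteq> j \<longrightarrow> ((i,j) \<in> G \<longleftrightarrow> (j,i) \<notin> G)) \<and>
     (\<forall>i<n. (i,i) \<notin> G) \<and>
     acyclic G"

definition dom_adj :: "nat \<Rightarrow> (nat \<times> nat) set \<Rightarrow> real mat" where
  "dom_adj n G = mat n n (\<lambda>(i,j). if (i,j) \<in> G then 1 else 0)"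

definition out_deg :: "real mat \<Rightarrow> nat \<Rightarrow> real" where
  "out_deg A i = (\<Sum>j<dim_col A. A $$ (i,j))"

definition laplacian :: "real mat \<Rightarrow> real mat" where
  "laplacian A = mat (dim_row A) (dim_col A) (\<lambda>(i,j). if i = j then out_deg A i else 0) - A"

definition permutation_mat :: "nat \<Rightarrow> real mat \<Rightarrow> bool" where
  "permutation_mat n P \<longleftrightarrow>
     (\<exists>p. p permutes {..<n} \<and> P = mat n n (\<lambda>(i,j). if i = p j then 1 else 0))"

(* w is a left eigenvector of M for k:  w nonzero and w^* M = k w^*  (real entries, so w^* = w^T) *)
definition left_eigenvector :: "real mat \<Rightarrow> real vec \<Rightarrow> real \<Rightarrow> bool" where
  "left_eigenvector M w k \<longleftrightarrow>
     w \<in> carrier_vec (dim_row M) \<and> w \<noteq> 0\<^sub>v (dim_row M) \<and>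
     vec (dim_col M) (\<lambda>j. w \<bullet> col M j) = k \<cdot>\<^sub>v w"

end

theory Submission
  imports Defs
begin

(* An acyclic tournament is transitive, so the out-neighbourhoods of its vertices form a chain and
   the out-degrees are exactly n - 1, n - 2, ..., 0.  Listing the vertices by decreasing out-degree,
   i.e. conjugating L by the corresponding permutation matrix, turns L into the upper triangular
   matrix with diagonal n - 1, ..., 0 and all entries above the diagonal equal to -1.  Row i of
   V^-1 is e_i - e_(i+1), so multiplying it into this matrix takes the difference of two consecutive
   rows, which is (n - 1 - i) (e_i - e_(i+1)). *)

lemma complete_dominance_graph_total:
  assumes "complete_dominance_graph n G" "u < n" "v < n" "u \<noteq> v"
  shows "(u, v) \<in> G \<or> (v, u) \<in> G"
proof -
  have "\<forall>i<n. \<forall>j<n. i \<noteq> j \<longrightarrow> ((i, j) \<in> G \<longleftrightarrow> (j, i) \<notin> G)"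
    using assms(1) unfolding complete_dominance_graph_def by blast
  with assms(2-4) show ?thesis by blast
qed

lemma complete_dominance_graph_irrefl:
  assumes "complete_dominance_graph n G"
  shows "(v, v) \<notin> G"
  using assms unfolding complete_dominance_graph_def by auto

lemma complete_dominance_graph_trans:
  assumes "complete_dominance_graph n G" "(a, b) \<in> G" "(b, c) \<in> G"
  shows "(a, c) \<in> G"
proof -
  from assms(1) have sub: "G \<subseteq> {..<n} \<times> {..<n}" and acyc: "\<forall>x. (x, x) \<notin> G\<^sup>+"
    unfolding complete_dominance_graph_def acyclic_def by blast+
  have "a < n" "c < n" using sub assms(2,3) by auto
  moreover have "a \<noteq> c" "(c, a) \<notin> G"
    using acyc assms(2,3) by (metis trancl.simps)+
  ultimately show ?thesis using complete_dominance_graph_total[OF assms(1)] by blast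
qed

definition out_degree :: "nat \<Rightarrow> (nat \<times> nat) set \<Rightarrow> nat \<Rightarrow> nat" where
  "out_degree n G v = card {u. u < n \<and> (v, u) \<in> G}"

lemma out_degree_less_of_edge:
  assumes "complete_dominance_graph n G" "(v, u) \<in> G"
  shows "out_degree n G u < out_degree n G v"
proof -
  have "u < n"
    using assms unfolding complete_dominance_graph_def by auto
  then have "{w. w < n \<and> (u, w) \<in> G} \<subset> {w. w < n \<and> (v, w) \<in> G}"
    using complete_dominance_graph_trans[OF assms] complete_dominance_graph_irrefl[OF assms(1)]
      assms(2)
    by auto
  then show ?thesis unfolding out_degree_def by (simp add: psubset_card_mono)
qed

lemma out_degree_less_iff_edge:
  assumes "complete_dominance_graph n G" "u < n" "v < n"
  shows "out_degree n G u < out_degree n G v \<longleftrightarrow> (v, u) \<in> G"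
proof
  assume less: "out_degree n G u < out_degree n G v"
  then have "(u, v) \<in> G \<or> (v, u) \<in> G"
    using complete_dominance_graph_total[OF assms] by auto
  then show "(v, u) \<in> G"
    using out_degree_less_of_edge[OF assms(1), of u v] less by auto
qed (rule out_degree_less_of_edge[OF assms(1)])

lemma out_degree_less:
  assumes "complete_dominance_graph n G" "v < n"
  shows "out_degree n G v < n"
proof -
  have "{u. u < n \<and> (v, u) \<in> G} \<subset> {..<n}"
    using assms unfolding complete_dominance_graph_def by auto
  then show ?thesis unfolding out_degree_def
    by (metis card_lessThan finite_lessThan psubset_card_mono)
qed

lemma inj_on_out_degree:
  assumes "complete_dominance_graph n G"
  shows "inj_on (out_degree n G) {..<n}"
proof (rule inj_onI, rule ccontr)
  fix u v assume "u \<in> {..<n}" "v \<in> {..<n}" "u \<noteq> v"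
    and "out_degree n G u = out_degree n G v"
  moreover from this(1-3) have "(u, v) \<in> G \<or> (v, u) \<in> G"
    using complete_dominance_graph_total[OF assms] by simp
  ultimately show False
    using out_degree_less_of_edge[OF assms, of u v] out_degree_less_of_edge[OF assms, of v u]
    by auto
qed

lemma complete_dominance_graph_ranking:
  assumes "complete_dominance_graph n G"
  obtains p where "p permutes {..<n}"
    and "\<And>i j. i < n \<Longrightarrow> j < n \<Longrightarrow> (p i, p j) \<in> G \<longleftrightarrow> i < j"
    and "\<And>i. i < n \<Longrightarrow> out_degree n G (p i) = n - 1 - i"
proof -
  define rank where "rank v = (if v < n then n - 1 - out_degree n G v else v)" for v
  have "inj_on rank {..<n}"
  proof (rule inj_onI)
    fix u v assume "u \<in> {..<n}" "v \<in> {..<n}" "rank u = rank v"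
    then have "out_degree n G u = out_degree n G v"
      using out_degree_less[OF assms, of u] out_degree_less[OF assms, of v]
      unfolding rank_def by auto
    with \<open>u \<in> {..<n}\<close> \<open>v \<in> {..<n}\<close> show "u = v"
      using inj_on_out_degree[OF assms] by (simp add: inj_on_eq_iff)
  qed
  moreover have "rank ` {..<n} \<subseteq> {..<n}" unfolding rank_def by auto
  ultimately have "bij_betw rank {..<n} {..<n}"
    by (simp add: bij_betw_def endo_inj_surj)
  then have rank: "rank permutes {..<n}"
    by (rule bij_imp_permutes) (simp add: rank_def)
  define p where "p = Hilbert_Choice.inv rank"
  have p: "p permutes {..<n}" unfolding p_def using rank by (rule permutes_inv)
  have p_lt: "p i < n" if "i < n" for i using p that by (metis lessThan_iff permutes_in_image)
  have degree: "out_degree n G (p i) = n - 1 - i" if "i < n" for i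
    using permutes_inverses(1)[OF rank, of i] out_degree_less[OF assms p_lt[OF that]]
      p_lt[OF that]
    unfolding p_def rank_def by auto
  show thesis
  proof (rule that[OF p _ degree])
    fix i j assume "i < n" "j < n"
    then show "(p i, p j) \<in> G \<longleftrightarrow> i < j"
      using out_degree_less_iff_edge[OF assms p_lt[of j] p_lt[of i]] degree[of i] degree[of j]
      by auto
  qed
qed

definition perm_mat :: "nat \<Rightarrow> (nat \<Rightarrow> nat) \<Rightarrow> real mat" where
  "perm_mat n p = mat n n (\<lambda>(i, j). if i = p j then 1 else 0)"

lemma permutation_mat_perm_mat: "p permutes {..<n} \<Longrightarrow> permutation_mat n (perm_mat n p)"
  unfolding permutation_mat_def perm_mat_def by blast

lemma perm_mat_carrier: "perm_mat n p \<in> carrier_mat n n"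
  unfolding perm_mat_def by simp

lemma mult_perm_mat_index:
  assumes "p permutes {..<n}" "A \<in> carrier_mat m n" "i < m" "j < n"
  shows "(A * perm_mat n p) $$ (i, j) = A $$ (i, p j)"
proof -
  have "p j < n" using assms(1,4) by (metis lessThan_iff permutes_in_image)
  then show ?thesis
    using assms(2-4)
    by (simp add: perm_mat_def scalar_prod_def if_distrib if_distribR cong: if_cong)
qed

lemma transpose_perm_mat_mult_index:
  assumes "p permutes {..<n}" "A \<in> carrier_mat n m" "i < n" "j < m"
  shows "(transpose_mat (perm_mat n p) * A) $$ (i, j) = A $$ (p i, j)"
proof -
  have "p i < n" using assms(1,3) by (metis lessThan_iff permutes_in_image)
  then show ?thesis
    using assms(2-4)
    by (simp add: perm_mat_def scalar_prod_def if_distrib if_distribR cong: if_cong)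
qed

lemma laplacian_dom_adj_carrier: "laplacian (dom_adj n G) \<in> carrier_mat n n"
  unfolding laplacian_def dom_adj_def by (intro minus_carrier_mat mat_carrier)

lemma laplacian_dom_adj_index:
  assumes "a < n" "b < n" "(a, a) \<notin> G"
  shows "laplacian (dom_adj n G) $$ (a, b) =
    (if a = b then real (out_degree n G a) else if (a, b) \<in> G then -1 else 0)"
proof -
  have "out_deg (dom_adj n G) a = real (card ({..<n} \<inter> {u. (a, u) \<in> G}))"
    unfolding out_deg_def dom_adj_def using assms(1) by (simp add: sum.If_cases)
  also have "{..<n} \<inter> {u. (a, u) \<in> G} = {u. u < n \<and> (a, u) \<in> G}" by auto
  finally show ?thesis
    unfolding laplacian_def dom_adj_def out_degree_def using assms by auto
qed

(* The Laplacian of the dominance graph with an edge i -> j for every i < j. *)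
definition ranked_laplacian :: "nat \<Rightarrow> real mat" where
  "ranked_laplacian n =
    mat n n (\<lambda>(i, j). if i = j then real (n - 1 - i) else if i < j then -1 else 0)"

lemma ranked_laplacian_conj:
  assumes "complete_dominance_graph n G"
  obtains p where "p permutes {..<n}"
    and "transpose_mat (perm_mat n p) * laplacian (dom_adj n G) * perm_mat n p = ranked_laplacian n"
proof -
  obtain p where p: "p permutes {..<n}"
    and edge: "\<And>i j. i < n \<Longrightarrow> j < n \<Longrightarrow> (p i, p j) \<in> G \<longleftrightarrow> i < j"
    and degree: "\<And>i. i < n \<Longrightarrow> out_degree n G (p i) = n - 1 - i"
    using complete_dominance_graph_ranking[OF assms] by blast
  have p_lt: "p i < n" if "i < n" for i using p that by (metis lessThan_iff permutes_in_image)
  have "transpose_mat (perm_mat n p) * laplacian (dom_adj n G) * perm_mat n p = ranked_laplacian n"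
  proof (rule eq_matI)
    fix i j assume "i < dim_row (ranked_laplacian n)" "j < dim_col (ranked_laplacian n)"
    then have "i < n" "j < n" by (simp_all add: ranked_laplacian_def)
    have "(transpose_mat (perm_mat n p) * laplacian (dom_adj n G) * perm_mat n p) $$ (i, j)
        = (transpose_mat (perm_mat n p) * laplacian (dom_adj n G)) $$ (i, p j)"
      using \<open>i < n\<close> \<open>j < n\<close> p perm_mat_carrier laplacian_dom_adj_carrier
      by (intro mult_perm_mat_index) (auto intro!: mult_carrier_mat)
    also have "\<dots> = laplacian (dom_adj n G) $$ (p i, p j)"
      using \<open>i < n\<close> \<open>j < n\<close> p laplacian_dom_adj_carrier p_lt
      by (intro transpose_perm_mat_mult_index) auto
    also have "\<dots> = (if p i = p j then real (out_degree n G (p i))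
        else if (p i, p j) \<in> G then -1 else 0)"
      using \<open>i < n\<close> \<open>j < n\<close>
      by (intro laplacian_dom_adj_index p_lt complete_dominance_graph_irrefl[OF assms])
    also have "\<dots> = ranked_laplacian n $$ (i, j)"
      using \<open>i < n\<close> \<open>j < n\<close> edge degree permutes_inj[OF p]
      by (simp add: ranked_laplacian_def inj_eq)
    finally show "(transpose_mat (perm_mat n p) * laplacian (dom_adj n G) * perm_mat n p) $$ (i, j)
        = ranked_laplacian n $$ (i, j)" .
  qed (simp_all add: ranked_laplacian_def perm_mat_def)
  with p show thesis by (rule that)
qed

definition upper_ones_mat :: "nat \<Rightarrow> real mat" where
  "upper_ones_mat n = mat n n (\<lambda>(i, j). if i \<le> j then 1 else 0)"

definition bidiag_diff_mat :: "nat \<Rightarrow> real mat" where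
  "bidiag_diff_mat n =
    mat n n (\<lambda>(i, j). if i = j then 1 else if j = i + 1 then -1 else 0)"

lemma bidiag_diff_mat_row_sum:
  assumes "i < n"
  shows "(\<Sum>k = 0..<n. bidiag_diff_mat n $$ (i, k) * f k)
    = f i - (if i + 1 < n then f (i + 1) else 0)"
proof -
  have "(\<Sum>k = 0..<n. bidiag_diff_mat n $$ (i, k) * f k)
      = (\<Sum>k = 0..<n. (if k = i then f k else 0) - (if k = i + 1 then f k else 0))"
    using assms by (intro sum.cong) (auto simp: bidiag_diff_mat_def)
  then show ?thesis using assms by (simp add: sum_subtractf)
qed

lemma bidiag_diff_mat_col_sum:
  assumes "j < n"
  shows "(\<Sum>k = 0..<n. f k * bidiag_diff_mat n $$ (k, j))
    = f j - (if 0 < j then f (j - 1) else 0)"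
proof -
  have "(\<Sum>k = 0..<n. f k * bidiag_diff_mat n $$ (k, j))
      = (\<Sum>k = 0..<n. (if k = j then f k else 0) - (if 0 < j \<and> k = j - 1 then f k else 0))"
    using assms by (intro sum.cong) (auto simp: bidiag_diff_mat_def)
  then show ?thesis using assms by (simp add: sum_subtractf)
qed

lemma inverts_mat_upper_ones_bidiag_diff: "inverts_mat (upper_ones_mat n) (bidiag_diff_mat n)"
  unfolding inverts_mat_def
proof (rule eq_matI)
  fix i j
  assume "i < dim_row (1\<^sub>m (dim_row (upper_ones_mat n)))"
    and "j < dim_col (1\<^sub>m (dim_row (upper_ones_mat n)))"
  then have "i < n" "j < n" by (simp_all add: upper_ones_mat_def)
  then have "(upper_ones_mat n * bidiag_diff_mat n) $$ (i, j)
      = (\<Sum>k = 0..<n. (if i \<le> k then 1 else 0) * bidiag_diff_mat n $$ (k, j))"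
    by (simp add: upper_ones_mat_def bidiag_diff_mat_def scalar_prod_def)
  also have "\<dots> = 1\<^sub>m n $$ (i, j)"
    using \<open>i < n\<close> \<open>j < n\<close> by (subst bidiag_diff_mat_col_sum) auto
  finally show "(upper_ones_mat n * bidiag_diff_mat n) $$ (i, j)
      = 1\<^sub>m (dim_row (upper_ones_mat n)) $$ (i, j)"
    by (simp add: upper_ones_mat_def)
qed (simp_all add: upper_ones_mat_def bidiag_diff_mat_def)

lemma inverts_mat_bidiag_diff_upper_ones: "inverts_mat (bidiag_diff_mat n) (upper_ones_mat n)"
  unfolding inverts_mat_def
proof (rule eq_matI)
  fix i j
  assume "i < dim_row (1\<^sub>m (dim_row (bidiag_diff_mat n)))"
    and "j < dim_col (1\<^sub>m (dim_row (bidiag_diff_mat n)))"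
  then have "i < n" "j < n" by (simp_all add: bidiag_diff_mat_def)
  then have "(bidiag_diff_mat n * upper_ones_mat n) $$ (i, j)
      = (\<Sum>k = 0..<n. bidiag_diff_mat n $$ (i, k) * (if k \<le> j then 1 else 0))"
    by (simp add: upper_ones_mat_def bidiag_diff_mat_def scalar_prod_def)
  also have "\<dots> = 1\<^sub>m n $$ (i, j)"
    using \<open>i < n\<close> \<open>j < n\<close> by (subst bidiag_diff_mat_row_sum) auto
  finally show "(bidiag_diff_mat n * upper_ones_mat n) $$ (i, j)
      = 1\<^sub>m (dim_row (bidiag_diff_mat n)) $$ (i, j)"
    by (simp add: bidiag_diff_mat_def)
qed (simp_all add: upper_ones_mat_def bidiag_diff_mat_def)

lemma left_eigenvector_ranked_laplacian:
  assumes "i < n"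
  shows "left_eigenvector (ranked_laplacian n) (row (bidiag_diff_mat n) i) (real (n - (i + 1)))"
  unfolding left_eigenvector_def
proof (intro conjI)
  have dims: "dim_row (ranked_laplacian n) = n" "dim_col (ranked_laplacian n) = n"
    "dim_row (bidiag_diff_mat n) = n" "dim_col (bidiag_diff_mat n) = n"
    by (simp_all add: ranked_laplacian_def bidiag_diff_mat_def)
  show "row (bidiag_diff_mat n) i \<in> carrier_vec (dim_row (ranked_laplacian n))"
    by (simp add: dims row_def)
  show "row (bidiag_diff_mat n) i \<noteq> 0\<^sub>v (dim_row (ranked_laplacian n))"
  proof
    assume "row (bidiag_diff_mat n) i = 0\<^sub>v (dim_row (ranked_laplacian n))"
    then have "row (bidiag_diff_mat n) i $ i = 0" using assms dims by simp
    then show False using assms by (simp add: bidiag_diff_mat_def)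
  qed
  show "vec (dim_col (ranked_laplacian n))
      (\<lambda>j. row (bidiag_diff_mat n) i \<bullet> col (ranked_laplacian n) j)
      = real (n - (i + 1)) \<cdot>\<^sub>v row (bidiag_diff_mat n) i"
  proof (rule eq_vecI)
    fix j assume "j < dim_vec (real (n - (i + 1)) \<cdot>\<^sub>v row (bidiag_diff_mat n) i)"
    then have "j < n" by (simp add: dims)
    have "row (bidiag_diff_mat n) i \<bullet> col (ranked_laplacian n) j
        = (\<Sum>k = 0..<n. bidiag_diff_mat n $$ (i, k) * ranked_laplacian n $$ (k, j))"
      using assms \<open>j < n\<close> by (simp add: dims scalar_prod_def)
    also have "\<dots> = ranked_laplacian n $$ (i, j)
        - (if i + 1 < n then ranked_laplacian n $$ (i + 1, j) else 0)"
      by (rule bidiag_diff_mat_row_sum[OF assms])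
    also have "\<dots> = real (n - (i + 1)) * bidiag_diff_mat n $$ (i, j)"
    proof -
      consider "j < i" | "j = i" | "j = i + 1" | "i + 1 < j" by linarith
      then show ?thesis
        using assms \<open>j < n\<close>
        by cases (simp_all add: ranked_laplacian_def bidiag_diff_mat_def of_nat_diff)
    qed
    finally show "vec (dim_col (ranked_laplacian n))
        (\<lambda>j. row (bidiag_diff_mat n) i \<bullet> col (ranked_laplacian n) j) $ j
        = (real (n - (i + 1)) \<cdot>\<^sub>v row (bidiag_diff_mat n) i) $ j"
      using assms \<open>j < n\<close> by (simp add: dims)
  qed (simp add: dims)
qed

theorem proposition3p3:
  fixes n :: nat and G :: "(nat \<times> nat) set"
  assumes "complete_dominance_graph n G"
  defines "L \<equiv> laplacian (dom_adj n G)"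
    and "V \<equiv> mat n n (\<lambda>(i,j). if i \<le> j then 1 else 0 :: real)"
    and "W \<equiv> mat n n (\<lambda>(i,j). if i = j then 1 else if j = i + 1 then -1 else 0 :: real)"
  shows "inverts_mat V W \<and> inverts_mat W V \<and>
         (\<exists>P. permutation_mat n P \<and>
              (\<forall>i<n. left_eigenvector (transpose_mat P * L * P) (row W i) (real (n - (i + 1)))))"
proof -
  have V: "V = upper_ones_mat n" and W: "W = bidiag_diff_mat n"
    unfolding V_def W_def upper_ones_mat_def bidiag_diff_mat_def by simp_all
  obtain p where "p permutes {..<n}"
    and "transpose_mat (perm_mat n p) * L * perm_mat n p = ranked_laplacian n"
    using ranked_laplacian_conj[OF assms(1)] unfolding L_def by blast
  then show ?thesis
    unfolding V W
    using inverts_mat_upper_ones_bidiag_diff inverts_mat_bidiag_diff_upper_ones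
      permutation_mat_perm_mat left_eigenvector_ranked_laplacian
    by metis
qed

end
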